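(* Let $\tau\subset\mathbb{Z}^4_{\ge0}$ be a B-facet containing a point $Q$ with exactly one nonzero coordinate such that $\tau\setminus\{Q\}$ has dimension $2$. Then $\tau$ is a $B_1$-facet, or a $B_2$-facet, or a flat border.
   Context: A $k$-simplex is a set of $k+1$ affinely independent points; a $k$-simplex $S\subset\mathbb{Z}^n_{\ge0}$ is a B-simplex if there is an index $i$ with exactly $k$ vertices in $\{x_i=0\}$ and the remaining vertex having $x_i=1$. Dimension of a finite set means dimension of its affine span. A B-facet in $\mathbb{Z}^n_{\ge0}$ is a finite set $\tau\subset\mathbb{Z}^n_{\ge0}$ whose affine span is a hyperplane $\{\langle a,x\rangle=b\}$ with all $a_j>0$, such that every $(n-1)$-simplex with vertices in $\tau$ is a B-simplex. For $\tau\subset\mathbb{Z}^4_{\ge0}$: $\tau$ is a $B_1$-facet if for some $i$ exactly one point has nonzero $x_i$, with $x_i=1$; a $B_2$-facet if for some distinct $i,j$ all $x\in\tau$ have $(x_i,x_j)\in\{(0,0),(1,0),(0,1)\}$; a flat border if there are distinct $i,j$ and $C\in\tau$ with $C_i=C_j=1$ such that $\tau$ contains at least two distinct points with $x_i=x_j=0$ and every point of $\tau$ other than $C$ lies in $\{x_i=0\}\cup\{x_j=0\}$. *)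

theory Defs
  imports "HOL-Analysis.Analysis"
begin

text \<open>Points of Z^n_{>=0} are represented as real vectors with nonnegative integer coordinates.\<close>

definition lattice_pt :: "real ^ 'n \<Rightarrow> bool" where
  "lattice_pt x \<longleftrightarrow> (\<forall>i. x $ i \<in> \<int> \<and> x $ i \<ge> 0)"

definition is_simplex :: "nat \<Rightarrow> (real ^ 'n) set \<Rightarrow> bool" where
  "is_simplex k S \<longleftrightarrow> finite S \<and> card S = k + 1 \<and> \<not> affine_dependent S"

definition B_simplex :: "nat \<Rightarrow> (real ^ 'n) set \<Rightarrow> bool" where
  "B_simplex k S \<longleftrightarrow> is_simplex k S \<and> (\<forall>x\<in>S. lattice_pt x) \<and>
     (\<exists>i. card {x\<in>S. x $ i = 0} = k \<and> (\<forall>x\<in>S. x $ i \<noteq> 0 \<longrightarrow> x $ i = 1))"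

definition B_facet :: "(real ^ 'n) set \<Rightarrow> bool" where
  "B_facet \<tau> \<longleftrightarrow> finite \<tau> \<and> (\<forall>x\<in>\<tau>. lattice_pt x) \<and>
     (\<exists>a b. (\<forall>j. a $ j > 0) \<and> affine hull \<tau> = {x. a \<bullet> x = b}) \<and>
     (\<forall>S\<subseteq>\<tau>. is_simplex (CARD('n) - 1) S \<longrightarrow> B_simplex (CARD('n) - 1) S)"

definition B1_facet :: "(real ^ 'n) set \<Rightarrow> bool" where
  "B1_facet \<tau> \<longleftrightarrow> (\<exists>i. \<exists>p\<in>\<tau>. p $ i = 1 \<and> (\<forall>x\<in>\<tau>. x \<noteq> p \<longrightarrow> x $ i = 0))"

definition B2_facet :: "(real ^ 'n) set \<Rightarrow> bool" where
  "B2_facet \<tau> \<longleftrightarrow> (\<exists>i j. i \<noteq> j \<and>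
     (\<forall>x\<in>\<tau>. (x $ i, x $ j) \<in> {(0,0), (1,0), (0,1)}))"

definition flat_border :: "(real ^ 'n) set \<Rightarrow> bool" where
  "flat_border \<tau> \<longleftrightarrow> (\<exists>i j C. i \<noteq> j \<and> C \<in> \<tau> \<and> C $ i = 1 \<and> C $ j = 1 \<and>
     (\<exists>p\<in>\<tau>. \<exists>q\<in>\<tau>. p \<noteq> q \<and> p $ i = 0 \<and> p $ j = 0 \<and> q $ i = 0 \<and> q $ j = 0) \<and>
     (\<forall>x\<in>\<tau> - {C}. x $ i = 0 \<or> x $ j = 0))"

end

theory Submission
  imports Defs
begin

text \<open>
  Let \<open>i\<close> be the axis of \<open>Q\<close>, \<open>K\<close> the other three coordinates and \<open>R = \<tau> - {Q}\<close>.
  Since \<open>\<tau>\<close> spans a hyperplane and \<open>R\<close> only a plane, \<open>Q\<close> lies off the affine hull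
  of \<open>R\<close>, so every triangle \<open>T\<close> in \<open>R\<close> extends to the 3-simplex \<open>T \<union> {Q}\<close> of \<open>\<tau>\<close>,
  which is a B-simplex. If its coordinate is \<open>i\<close>, then \<open>Q\<^sub>i = 1\<close> and the whole plane of
  \<open>R\<close> lies in \<open>x\<^sub>i = 0\<close>, so \<open>\<tau>\<close> is a B1-facet. Otherwise every triangle of \<open>R\<close>
  is a B-simplex in a coordinate of \<open>K\<close>. Two more facts come from the hyperplane: a point
  of \<open>\<tau>\<close> is determined by its \<open>K\<close>-coordinates, and at most one point of \<open>R\<close> vanishes
  on two given coordinates of \<open>K\<close> (such points lie on a line through \<open>Q\<close>).

  These three properties alone force a coordinate \<open>m \<in> K\<close> which takes only the values
  0 and 1 on \<open>R\<close>, with at least two zeros and a one. A case analysis of the points with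
  \<open>x\<^sub>m = 1\<close> and of the zeros of \<open>m\<close> then exhibits a B1-facet, a B2-facet or a flat border.
\<close>

definition B_coord :: "'n \<Rightarrow> (real ^ 'n) set \<Rightarrow> bool" where
  "B_coord c S \<longleftrightarrow> (\<exists>p\<in>S. p $ c = 1 \<and> (\<forall>x\<in>S - {p}. x $ c = 0))"

lemma B_simplex_imp_B_coord:
  assumes "B_simplex k S"
  obtains c where "B_coord c S"
proof -
  from assms obtain c where fin: "finite S" and card_S: "card S = k + 1"
    and card_zeros: "card {x\<in>S. x $ c = 0} = k" and unit: "\<forall>x\<in>S. x $ c \<noteq> 0 \<longrightarrow> x $ c = 1"
    unfolding B_simplex_def is_simplex_def by blast
  have "S - {x\<in>S. x $ c = 0} = {x\<in>S. x $ c \<noteq> 0}" by auto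
  moreover have "card (S - {x\<in>S. x $ c = 0}) = 1"
    using fin card_S card_zeros by (simp add: card_Diff_subset)
  ultimately obtain p where "{x\<in>S. x $ c \<noteq> 0} = {p}" by (metis card_1_singletonE)
  then have "B_coord c S"
    unfolding B_coord_def using unit by (intro bexI[of _ p]) auto
  then show thesis by (rule that)
qed

lemma B_coord_triangle_iff:
  assumes "u \<noteq> v" "u \<noteq> w" "v \<noteq> w"
  shows "B_coord c {u, v, w} \<longleftrightarrow> (u $ c, v $ c, w $ c) \<in> {(1, 0, 0), (0, 1, 0), (0, 0, 1)}"
  using assms unfolding B_coord_def by auto

lemma B_coord_insert_zero:
  assumes "B_coord c (insert q S)" "q $ c = 0"
  shows "B_coord c S"
  using assms unfolding B_coord_def by fastforce

lemma B_coord_insert_nonzero: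
  assumes "B_coord c (insert q S)" "q $ c \<noteq> 0"
  shows "q $ c = 1" "\<forall>x\<in>S - {q}. x $ c = 0"
  using assms unfolding B_coord_def by auto

lemma is_simplex_2_if_coord_separates:
  fixes u v w :: "real ^ 'n"
  assumes "u \<noteq> v" "u $ m = v $ m" "w $ m \<noteq> u $ m"
  shows "is_simplex 2 {u, v, w}"
proof -
  have "\<not> collinear {u, w, v}"
    unfolding collinear_3_expand
  proof
    assume "u = v \<or> (\<exists>t. w = t *\<^sub>R u + (1 - t) *\<^sub>R v)"
    then obtain t where "w = t *\<^sub>R u + (1 - t) *\<^sub>R v" using assms by auto
    then have "w $ m = t * u $ m + (1 - t) * v $ m" by simp
    also have "\<dots> = u $ m" using assms by (simp add: algebra_simps)
    finally show False using assms by simp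
  qed
  then have "\<not> affine_dependent {u, v, w}"
    by (simp add: collinear_3_eq_affine_dependent insert_commute)
  moreover have "w \<noteq> u" "w \<noteq> v" using assms by auto
  ultimately show ?thesis unfolding is_simplex_def using assms by auto
qed

lemma hyperplane_eq_if_eq_off_coord:
  fixes a x y :: "real ^ 'n"
  assumes "a $ i \<noteq> 0" "a \<bullet> x = a \<bullet> y" "\<And>c. c \<noteq> i \<Longrightarrow> x $ c = y $ c"
  shows "x = y"
proof -
  have "x - y = axis i (x $ i - y $ i)"
    using assms(3) by (auto simp: vec_eq_iff axis_def)
  then have "a $ i * (x $ i - y $ i) = 0"
    using assms(2) by (metis inner_axis inner_diff_right inner_real_def right_minus_eq)
  then have "x $ i = y $ i" using assms(1) by simp
  then show ?thesis using assms(3) by (metis vec_eq_iff)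
qed

lemma hyperplane_mem_affine_hull_pair:
  fixes a x y z :: "real ^ 'n"
  assumes ai: "a $ i \<noteq> 0" and on: "a \<bullet> x = b" "a \<bullet> y = b" "a \<bullet> z = b" and "x \<noteq> y"
    and off: "\<And>c. c \<noteq> i \<Longrightarrow> c \<noteq> r \<Longrightarrow> x $ c = z $ c \<and> y $ c = z $ c"
  shows "z \<in> affine hull {x, y}"
proof -
  have "x $ r \<noteq> y $ r"
  proof
    assume "x $ r = y $ r"
    then have "x = y"
      using hyperplane_eq_if_eq_off_coord[OF ai] on off by (metis (full_types))
    with \<open>x \<noteq> y\<close> show False ..
  qed
  define t where "t = (z $ r - x $ r) / (y $ r - x $ r)"
  define p where "p = (1 - t) *\<^sub>R x + t *\<^sub>R y"
  have "p $ r = x $ r + t * (y $ r - x $ r)" by (simp add: p_def algebra_simps)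
  then have pr: "p $ r = z $ r" using \<open>x $ r \<noteq> y $ r\<close> by (simp add: t_def)
  have "a \<bullet> p = b"
    using on by (simp add: p_def inner_add_right algebra_simps)
  moreover have "p $ c = z $ c" if "c \<noteq> i" for c
    using pr off[OF that] by (cases "c = r") (auto simp: p_def algebra_simps)
  ultimately have "p = z"
    using on(3) by (intro hyperplane_eq_if_eq_off_coord[OF ai]) auto
  then show ?thesis
    unfolding affine_hull_2 p_def by (intro CollectI exI[of _ "1 - t"] exI[of _ t]) auto
qed

lemma subset_pair_if_pairwise_split:
  fixes P :: "(real ^ 'n) set"
  assumes "p0 \<in> P" "p1 \<in> P" "p0 \<noteq> p1"
    and "\<And>pa pb. pa \<in> P \<Longrightarrow> pb \<in> P \<Longrightarrow> pa \<noteq> pb \<Longrightarrow>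
      (pa $ c = 0 \<and> pb $ c = 1) \<or> (pa $ c = 1 \<and> pb $ c = 0)"
  shows "P \<subseteq> {p0, p1}"
proof
  fix x assume "x \<in> P"
  show "x \<in> {p0, p1}"
  proof (rule ccontr)
    assume "x \<notin> {p0, p1}"
    then show False
      using assms(4)[of p0 x] assms(4)[of p1 x] assms(4)[of p0 p1] assms(1-3) \<open>x \<in> P\<close> by auto
  qed
qed

text \<open>\<open>R\<close> stands for \<open>\<tau> - {Q}\<close> and \<open>K\<close> for the coordinates vanishing at \<open>Q\<close>.\<close>

locale B_config =
  fixes R :: "(real ^ 'n) set" and Q :: "real ^ 'n" and K :: "'n set"
  assumes card_K: "card K = 3"
    and Q_notin: "Q \<notin> R"
    and Q_vanishes: "\<And>c. c \<in> K \<Longrightarrow> Q $ c = 0"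
    and eq_if_eq_on_K:
      "\<And>x y. x \<in> insert Q R \<Longrightarrow> y \<in> insert Q R \<Longrightarrow> \<forall>c\<in>K. x $ c = y $ c \<Longrightarrow> x = y"
    and vanishing_pair_unique: "\<And>x y m m'. x \<in> R \<Longrightarrow> y \<in> R \<Longrightarrow> m \<in> K \<Longrightarrow> m' \<in> K \<Longrightarrow> m \<noteq> m' \<Longrightarrow>
      x $ m = 0 \<Longrightarrow> x $ m' = 0 \<Longrightarrow> y $ m = 0 \<Longrightarrow> y $ m' = 0 \<Longrightarrow> x = y"
    and triangle_B: "\<And>S. S \<subseteq> R \<Longrightarrow> is_simplex 2 S \<Longrightarrow> \<exists>c\<in>K. B_coord c S"
    and triangle_exists: "\<exists>S\<subseteq>R. is_simplex 2 S"
begin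

lemma K_eq_if_distinct:
  assumes "{m1, m2, m3} \<subseteq> K" "m1 \<noteq> m2" "m1 \<noteq> m3" "m2 \<noteq> m3"
  shows "K = {m1, m2, m3}"
  using assms card_K by (intro card_subset_eq[symmetric]) (auto intro: card_ge_0_finite)

lemma K_split:
  assumes "m \<in> K"
  obtains s t where "K = {m, s, t}" "m \<noteq> s" "m \<noteq> t" "s \<noteq> t"
proof -
  have "card (K - {m}) = 2" using assms card_K by (simp add: card_Diff_singleton)
  then obtain s t where "K - {m} = {s, t}" "s \<noteq> t" by (meson card_2_iff)
  then show thesis using assms by (intro that[of s t]) auto
qed

lemma nonzero_at_third_coord:
  assumes "x \<in> R" "{m1, m2, m3} \<subseteq> K" "m1 \<noteq> m2" "m1 \<noteq> m3" "m2 \<noteq> m3"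
    and "x $ m1 = 0" "x $ m2 = 0"
  shows "x $ m3 \<noteq> 0"
proof
  assume "x $ m3 = 0"
  then have "x = Q"
    using assms K_eq_if_distinct[OF assms(2-5)] Q_vanishes by (intro eq_if_eq_on_K) auto
  with \<open>x \<in> R\<close> Q_notin show False by simp
qed

lemma separated_triangle:
  assumes "u \<in> R" "v \<in> R" "w \<in> R" "u \<noteq> v" "u $ m = v $ m" "w $ m \<noteq> u $ m"
  obtains c where "c \<in> K" "(u $ c, v $ c, w $ c) \<in> {(1, 0, 0), (0, 1, 0), (0, 0, 1)}"
proof -
  have "u \<noteq> w" "v \<noteq> w" using assms by auto
  moreover obtain c where "c \<in> K" "B_coord c {u, v, w}"
    using triangle_B[OF _ is_simplex_2_if_coord_separates[OF assms(4-6)]] assms(1-3) by auto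
  ultimately show thesis using that assms(4) by (simp add: B_coord_triangle_iff)
qed

definition binary_coord :: "'n \<Rightarrow> bool" where
  "binary_coord m \<longleftrightarrow> (\<forall>x\<in>R. x $ m = 0 \<or> x $ m = 1) \<and>
     (\<exists>z1\<in>R. \<exists>z2\<in>R. z1 \<noteq> z2 \<and> z1 $ m = 0 \<and> z2 $ m = 0) \<and> (\<exists>p\<in>R. p $ m = 1)"

lemma split_coord_of_vanishing_pair:
  assumes "u \<in> R" "v \<in> R" "g \<in> R" "u \<noteq> v" "m \<in> K" "u $ m = 0" "v $ m = 0"
    and "g $ m \<noteq> 0" "g $ m \<noteq> 1"
  obtains m' where "m' \<in> K" "m' \<noteq> m" "g $ m' = 0" "(u $ m' = 0 \<and> v $ m' = 1) \<or> (u $ m' = 1 \<and> v $ m' = 0)"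
proof -
  obtain c where c: "c \<in> K" "(u $ c, v $ c, g $ c) \<in> {(1, 0, 0), (0, 1, 0), (0, 0, 1)}"
    using separated_triangle[of u v g m] assms by auto
  have "\<not> (u $ c = 0 \<and> v $ c = 0 \<and> g $ c = 1)"
    using vanishing_pair_unique[of u v m c] assms c(1) by (cases "c = m") auto
  then show thesis using that[of c] c assms by (cases "c = m") auto
qed

lemma not_binary_coordE:
  assumes "\<not> binary_coord m" "z1 \<in> R" "z2 \<in> R" "z1 \<noteq> z2" "z1 $ m = 0" "z2 $ m = 0"
    and "p \<in> R" "p $ m = 1"
  obtains g where "g \<in> R" "g $ m \<noteq> 0" "g $ m \<noteq> 1"
  using assms unfolding binary_coord_def by blast

text \<open>
  Failure of binarity at \<open>m\<close>, \<open>m2\<close>, \<open>m3\<close> produces points \<open>g\<close>, \<open>h\<close>, \<open>k\<close> with values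
  outside \<open>{0, 1}\<close> at these coordinates, and then the triangle \<open>g h k\<close> is a B-simplex at no
  coordinate of \<open>K = {m, m2, m3}\<close>.
\<close>

lemma binary_coord_exists_if_vanishing_pair:
  assumes "m \<in> K" "u \<in> R" "v \<in> R" "w \<in> R" "u \<noteq> v" "u $ m = 0" "v $ m = 0" "w $ m = 1"
  shows "\<exists>m\<in>K. binary_coord m"
proof (rule ccontr)
  assume none: "\<not> ?thesis"
  obtain g where g: "g \<in> R" "g $ m \<noteq> 0" "g $ m \<noteq> 1"
    using not_binary_coordE[of m u v w] none assms by blast
  obtain m2 where m2: "m2 \<in> K" "m2 \<noteq> m" "g $ m2 = 0"
    and "(u $ m2 = 0 \<and> v $ m2 = 1) \<or> (u $ m2 = 1 \<and> v $ m2 = 0)"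
    using split_coord_of_vanishing_pair[of u v g m] assms g by blast
  then obtain u' v' where u': "u' \<in> R" "u' $ m = 0" "u' $ m2 = 0" and v': "v' \<in> R" "v' $ m2 = 1"
    using assms by blast
  have "u' \<noteq> g" using u' g by auto
  then obtain h where h: "h \<in> R" "h $ m2 \<noteq> 0" "h $ m2 \<noteq> 1"
    using not_binary_coordE[of m2 u' g v'] none u' v' g m2 by blast
  obtain m3 where m3: "m3 \<in> K" "m3 \<noteq> m2" "h $ m3 = 0"
    and u'g: "(u' $ m3 = 0 \<and> g $ m3 = 1) \<or> (u' $ m3 = 1 \<and> g $ m3 = 0)"
    using split_coord_of_vanishing_pair[of u' g h m2] u' g h m2 \<open>u' \<noteq> g\<close> by blast
  have "m3 \<noteq> m" using u'g u' g by auto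
  then have "u' $ m3 \<noteq> 0"
    using nonzero_at_third_coord[of u' m m2 m3] u' m2 m3 assms(1) by auto
  then have "g $ m3 = 0" "u' $ m3 = 1" using u'g by auto
  have "g \<noteq> h" using g h m2 by auto
  then obtain k where k: "k \<in> R" "k $ m3 \<noteq> 0" "k $ m3 \<noteq> 1"
    using not_binary_coordE[of m3 g h u'] none \<open>g $ m3 = 0\<close> \<open>u' $ m3 = 1\<close> g h m3 u' by blast
  obtain m4 where "m4 \<in> K" "m4 \<noteq> m3" "(g $ m4 = 0 \<and> h $ m4 = 1) \<or> (g $ m4 = 1 \<and> h $ m4 = 0)"
    using split_coord_of_vanishing_pair[of g h k m3] g h k m3 \<open>g \<noteq> h\<close> \<open>g $ m3 = 0\<close> by blast
  moreover have "K = {m, m2, m3}"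
    using K_eq_if_distinct[of m m2 m3] assms(1) m2 m3 \<open>m3 \<noteq> m\<close> by auto
  ultimately show False using g h by auto
qed

lemma binary_coord_exists: "\<exists>m\<in>K. binary_coord m"
proof -
  obtain S where S: "S \<subseteq> R" "is_simplex 2 S" using triangle_exists by blast
  then obtain m p where "m \<in> K" "p \<in> S" "p $ m = 1" and zeros: "\<forall>x\<in>S - {p}. x $ m = 0"
    using triangle_B unfolding B_coord_def by blast
  moreover have "card (S - {p}) = 2"
    using S(2) \<open>p \<in> S\<close> unfolding is_simplex_def by simp
  then obtain u v where "S - {p} = {u, v}" "u \<noteq> v" by (meson card_2_iff)
  ultimately show ?thesis
    using binary_coord_exists_if_vanishing_pair[of m u v p] S(1) zeros by auto
qed

abbreviation classified :: bool where
  "classified \<equiv> B1_facet (insert Q R) \<or> B2_facet (insert Q R) \<or> flat_border (insert Q R)"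

lemma B1_facetI:
  assumes "m \<in> K" "p \<in> R" "p $ m = 1" "\<forall>x\<in>R - {p}. x $ m = 0"
  shows "B1_facet (insert Q R)"
  unfolding B1_facet_def using assms Q_vanishes[OF assms(1)] by (intro exI[of _ m] bexI[of _ p]) auto

lemma B2_facetI:
  assumes "m \<in> K" "r \<in> K" "m \<noteq> r" "\<forall>x\<in>R. (x $ m, x $ r) \<in> {(0, 0), (1, 0), (0, 1)}"
  shows "B2_facet (insert Q R)"
  unfolding B2_facet_def using assms Q_vanishes[OF assms(1)] Q_vanishes[OF assms(2)]
  by (intro exI[of _ m] exI[of _ r]) auto

lemma flat_borderI:
  assumes "m \<in> K" "r \<in> K" "m \<noteq> r" "C \<in> R" "C $ m = 1" "C $ r = 1"
    and "z \<in> R" "z $ m = 0" "z $ r = 0" "\<forall>x\<in>R - {C}. x $ m = 0 \<or> x $ r = 0"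
  shows "flat_border (insert Q R)"
proof -
  have "z \<noteq> Q" using assms(7) Q_notin by auto
  then show ?thesis
    unfolding flat_border_def using assms Q_vanishes[OF assms(1)] Q_vanishes[OF assms(2)]
    by (intro exI[of _ m] exI[of _ r] exI[of _ C]) auto
qed

lemma ones_zero_triangle:
  assumes "K = {m, s, t}" "pa \<in> R" "pb \<in> R" "pa \<noteq> pb" "pa $ m = 1" "pb $ m = 1" "z \<in> R" "z $ m = 0"
  shows "\<exists>c\<in>{s, t}. (pa $ c, pb $ c, z $ c) \<in> {(1, 0, 0), (0, 1, 0), (0, 0, 1)}"
proof -
  obtain c where "c \<in> K" and c: "(pa $ c, pb $ c, z $ c) \<in> {(1, 0, 0), (0, 1, 0), (0, 0, 1)}"
    using separated_triangle[of pa pb z m] assms(2-8) by auto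
  moreover have "c \<noteq> m" using c assms(5,6) by auto
  ultimately show ?thesis using assms(1) by auto
qed

lemma classified_if_ones_vanish:
  assumes K: "K = {m, r, r'}" "m \<noteq> r" "m \<noteq> r'" "r \<noteq> r'"
    and binary: "\<forall>x\<in>R. x $ m = 0 \<or> x $ m = 1"
    and ones: "p0 \<in> R" "p1 \<in> R" "p0 \<noteq> p1" "p0 $ m = 1" "p1 $ m = 1"
    and ones_vanish: "\<forall>p\<in>R. p $ m = 1 \<longrightarrow> p $ r = 0"
  shows classified
proof (cases "\<forall>z\<in>R. z $ m = 0 \<longrightarrow> z $ r = 0 \<or> z $ r = 1")
  case True
  then have "B2_facet (insert Q R)"
    using binary ones_vanish K by (intro B2_facetI[of m r]) auto
  then show ?thesis by simp
next
  case False
  then obtain z where z: "z \<in> R" "z $ m = 0" "z $ r \<noteq> 0" "z $ r \<noteq> 1" by auto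
  let ?P = "{p\<in>R. p $ m = 1}"
  have split: "z $ r' = 0 \<and> ((pa $ r' = 0 \<and> pb $ r' = 1) \<or> (pa $ r' = 1 \<and> pb $ r' = 0))"
    if pab: "pa \<in> ?P" "pb \<in> ?P" "pa \<noteq> pb" for pa pb
  proof -
    have "(pa $ r', pb $ r', z $ r') \<in> {(1, 0, 0), (0, 1, 0), (0, 0, 1)}"
      using ones_zero_triangle[OF K(1), of pa pb z] pab z by auto
    moreover have "\<not> (pa $ r' = 0 \<and> pb $ r' = 0)"
      using eq_if_eq_on_K[of pa pb] pab ones_vanish K by auto
    ultimately show ?thesis by auto
  qed
  have P: "?P \<subseteq> {p0, p1}"
    using subset_pair_if_pairwise_split[of p0 ?P p1 r'] split ones by auto
  obtain C D where CD: "{C, D} = {p0, p1}" "C \<in> ?P" "C $ r' = 1" "D $ r' = 0"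
  proof -
    from split[of p0 p1] ones consider "p0 $ r' = 1" "p1 $ r' = 0" | "p0 $ r' = 0" "p1 $ r' = 1" by auto
    then show thesis using that[of p0 p1] that[of p1 p0] ones by cases (auto simp: insert_commute)
  qed
  have others: "x $ m = 0 \<or> x = D" if "x \<in> R" "x \<noteq> C" for x
    using binary P CD that by auto
  have "flat_border (insert Q R)"
    using K ones CD z split[of p0 p1] others by (intro flat_borderI[of m r' C z]) auto
  then show ?thesis by simp
qed

lemma ones_vanish_at_common_coord:
  assumes K: "K = {m, s, t}" "m \<noteq> s" "m \<noteq> t" "s \<noteq> t"
    and ones: "p0 \<in> R" "p1 \<in> R" "p0 \<noteq> p1" "p0 $ m = 1" "p1 $ m = 1"
    and z: "z \<in> R" "z $ m = 0" "z $ s \<noteq> 0" "z $ t \<noteq> 0"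
  shows "\<exists>r\<in>{s, t}. \<forall>p\<in>R. p $ m = 1 \<longrightarrow> p $ r = 0"
proof -
  have pair: "(pa $ s = 0 \<and> pb $ s = 0) \<or> (pa $ t = 0 \<and> pb $ t = 0)"
    if pab: "pa \<in> R" "pb \<in> R" "pa \<noteq> pb" "pa $ m = 1" "pb $ m = 1" for pa pb
    using ones_zero_triangle[OF K(1) pab z(1,2)] z(3,4) by auto
  show ?thesis
  proof (rule ccontr)
    assume "\<not> ?thesis"
    then obtain a b where a: "a \<in> R" "a $ m = 1" "a $ s \<noteq> 0" and b: "b \<in> R" "b $ m = 1" "b $ t \<noteq> 0"
      by auto
    show False
    proof (cases "a = b")
      case True
      then show False using pair[of a p0] pair[of a p1] a b ones by auto
    next
      case False
      then show False using pair[of a b] a b by auto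
    qed
  qed
qed

lemma classified_if_zeros_on_axes:
  assumes K: "K = {m, s, t}" "m \<noteq> s" "m \<noteq> t" "s \<noteq> t"
    and binary: "\<forall>x\<in>R. x $ m = 0 \<or> x $ m = 1"
    and ones: "p0 \<in> R" "p1 \<in> R" "p0 \<noteq> p1" "p0 $ m = 1" "p1 $ m = 1"
    and zeros: "z1 \<in> R" "z2 \<in> R" "z1 \<noteq> z2" "z1 $ m = 0" "z2 $ m = 0"
    and on_axes: "\<forall>z\<in>R. z $ m = 0 \<longrightarrow> z $ s = 0 \<or> z $ t = 0"
  shows classified
proof -
  obtain zs zt where zs: "zs \<in> R" "zs $ m = 0" "zs $ s = 0" and zt: "zt \<in> R" "zt $ m = 0" "zt $ t = 0"
  proof -
    have "\<not> (z1 $ s = 0 \<and> z2 $ s = 0)" "\<not> (z1 $ t = 0 \<and> z2 $ t = 0)"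
      using vanishing_pair_unique[of z1 z2 m s] vanishing_pair_unique[of z1 z2 m t] zeros K by auto
    then show thesis using that on_axes zeros by blast
  qed
  have "zs $ t \<noteq> 0" "zt $ s \<noteq> 0"
    using nonzero_at_third_coord[of zs m s t] nonzero_at_third_coord[of zt m t s] zs zt K by auto
  let ?P = "{p\<in>R. p $ m = 1}"
  have split: "((pa $ s = 0 \<and> pb $ s = 1) \<or> (pa $ s = 1 \<and> pb $ s = 0)) \<and>
      ((pa $ t = 0 \<and> pb $ t = 1) \<or> (pa $ t = 1 \<and> pb $ t = 0))"
    if pab: "pa \<in> ?P" "pb \<in> ?P" "pa \<noteq> pb" for pa pb
  proof -
    have "(pa $ s = 0 \<and> pb $ s = 1 \<or> pa $ s = 1 \<and> pb $ s = 0) \<or> (pa $ t = 0 \<and> pb $ t = 0)"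
      using ones_zero_triangle[OF K(1), of pa pb zs] pab zs \<open>zs $ t \<noteq> 0\<close> by auto
    moreover have "(pa $ t = 0 \<and> pb $ t = 1 \<or> pa $ t = 1 \<and> pb $ t = 0) \<or> (pa $ s = 0 \<and> pb $ s = 0)"
      using ones_zero_triangle[OF K(1), of pa pb zt] pab zt \<open>zt $ s \<noteq> 0\<close> by auto
    moreover have "\<not> (pa $ s = 0 \<and> pb $ s = 0 \<and> pa $ t = 0 \<and> pb $ t = 0)"
      using eq_if_eq_on_K[of pa pb] pab K by auto
    ultimately show ?thesis by auto
  qed
  have P: "?P \<subseteq> {p0, p1}"
    using subset_pair_if_pairwise_split[of p0 ?P p1 s] split ones by auto
  obtain C D where CD: "{C, D} = {p0, p1}" "C \<in> ?P" "D \<in> ?P" "C $ s = 1" "D $ s = 0"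
  proof -
    from split[of p0 p1] ones consider "p0 $ s = 1" "p1 $ s = 0" | "p0 $ s = 0" "p1 $ s = 1" by auto
    then show thesis using that[of p0 p1] that[of p1 p0] ones by cases (auto simp: insert_commute)
  qed
  have others: "x $ m = 0 \<or> x = D" if "x \<in> R" "x \<noteq> C" for x
    using binary P CD that by auto
  consider "C $ t = 1" "D $ t = 0" | "C $ t = 0" "D $ t = 1"
    using split[of C D] CD by force
  then have "flat_border (insert Q R)"
  proof cases
    case 1
    then show ?thesis
      using K ones CD on_axes others by (intro flat_borderI[of s t C D]) auto
  next
    case 2
    then show ?thesis
      using K ones CD zs others by (intro flat_borderI[of m s C zs]) auto
  qed
  then show ?thesis by simp
qed

lemma classified_if_binary_coord:
  assumes "m \<in> K" "binary_coord m"
  shows classified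
proof -
  obtain s t where K: "K = {m, s, t}" "m \<noteq> s" "m \<noteq> t" "s \<noteq> t"
    using K_split[OF assms(1)] by blast
  obtain z1 z2 p0 where zeros: "z1 \<in> R" "z2 \<in> R" "z1 \<noteq> z2" "z1 $ m = 0" "z2 $ m = 0"
    and p0: "p0 \<in> R" "p0 $ m = 1" and binary: "\<forall>x\<in>R. x $ m = 0 \<or> x $ m = 1"
    using assms(2) unfolding binary_coord_def by blast
  show ?thesis
  proof (cases "\<forall>x\<in>R - {p0}. x $ m = 0")
    case True
    then show ?thesis using B1_facetI[OF assms(1) p0] by simp
  next
    case False
    then obtain p1 where p1: "p1 \<in> R" "p1 \<noteq> p0" "p1 $ m = 1" using binary by auto
    then have ones: "p0 \<in> R" "p1 \<in> R" "p0 \<noteq> p1" "p0 $ m = 1" "p1 $ m = 1" using p0 by auto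
    show ?thesis
    proof (cases "\<exists>z\<in>R. z $ m = 0 \<and> z $ s \<noteq> 0 \<and> z $ t \<noteq> 0")
      case True
      then obtain r r' where "{r, r'} = {s, t}" "r \<noteq> r'" "\<forall>p\<in>R. p $ m = 1 \<longrightarrow> p $ r = 0"
        using ones_vanish_at_common_coord[OF K ones] K(4) by blast
      then show ?thesis
        using classified_if_ones_vanish[OF _ _ _ _ binary ones, of r r'] K by auto
    next
      case False
      then show ?thesis using classified_if_zeros_on_axes[OF K binary ones zeros] by auto
    qed
  qed
qed

lemma classification: classified
  using binary_coord_exists classified_if_binary_coord by blast

end

locale axis_B_facet =
  fixes \<tau> :: "(real ^ 4) set" and Q a :: "real ^ 4" and b :: real and i :: 4
  assumes hull_eq: "affine hull \<tau> = {x. a \<bullet> x = b}" and a_i: "a $ i \<noteq> 0"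
    and simplices_B: "\<And>S. S \<subseteq> \<tau> \<Longrightarrow> is_simplex 3 S \<Longrightarrow> B_simplex 3 S"
    and Q_in: "Q \<in> \<tau>" and Q_i: "Q $ i \<noteq> 0" and Q_off_axis: "\<And>c. c \<noteq> i \<Longrightarrow> Q $ c = 0"
    and aff_dim_rest: "aff_dim (\<tau> - {Q}) = 2"
begin

lemma inner_eq: "x \<in> \<tau> \<Longrightarrow> a \<bullet> x = b"
  using hull_inc[of x \<tau>] hull_eq by auto

lemma eq_if_eq_off_axis: "x \<in> \<tau> \<Longrightarrow> y \<in> \<tau> \<Longrightarrow> \<forall>c. c \<noteq> i \<longrightarrow> x $ c = y $ c \<Longrightarrow> x = y"
  by (rule hyperplane_eq_if_eq_off_coord[OF a_i]) (auto simp: inner_eq)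

lemma Q_notin_hull_rest: "Q \<notin> affine hull (\<tau> - {Q})"
proof
  assume "Q \<in> affine hull (\<tau> - {Q})"
  then have "aff_dim \<tau> = 2"
    using aff_dim_insert[of Q "\<tau> - {Q}"] Q_in aff_dim_rest by (simp add: insert_absorb)
  moreover have "aff_dim \<tau> = 3"
  proof -
    have "a \<noteq> 0" using a_i by auto
    moreover have "aff_dim \<tau> = aff_dim {x. a \<bullet> x = b}"
      by (metis aff_dim_affine_hull hull_eq)
    ultimately show ?thesis by simp
  qed
  ultimately show False by simp
qed

lemma vanishing_pair_unique:
  assumes "x \<in> \<tau> - {Q}" "y \<in> \<tau> - {Q}" "m \<noteq> i" "m' \<noteq> i" "m \<noteq> m'"
    and "x $ m = 0" "x $ m' = 0" "y $ m = 0" "y $ m' = 0"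
  shows "x = y"
proof (rule ccontr)
  assume "x \<noteq> y"
  have "card (UNIV - {i, m, m'}) = 1"
    using assms(3-5) by (simp add: card_Diff_subset)
  then obtain r where r: "UNIV - {i, m, m'} = {r}" by (rule card_1_singletonE)
  have "Q \<in> affine hull {x, y}"
  proof (rule hyperplane_mem_affine_hull_pair[OF a_i _ _ _ \<open>x \<noteq> y\<close>])
    show "a \<bullet> x = b" "a \<bullet> y = b" "a \<bullet> Q = b" using assms(1,2) Q_in by (auto simp: inner_eq)
    show "x $ c = Q $ c \<and> y $ c = Q $ c" if "c \<noteq> i" "c \<noteq> r" for c
    proof -
      have "c \<notin> UNIV - {i, m, m'}" using r that(2) by simp
      then have "c = m \<or> c = m'" using that(1) by simp
      then show ?thesis using assms(6-9) Q_off_axis[OF that(1)] by auto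
    qed
  qed
  moreover have "affine hull {x, y} \<subseteq> affine hull (\<tau> - {Q})"
    using assms(1,2) by (intro hull_mono) auto
  ultimately show False using Q_notin_hull_rest by auto
qed

lemma B_coord_insert_Q:
  assumes "S \<subseteq> \<tau> - {Q}" "is_simplex 2 S"
  obtains c where "B_coord c (insert Q S)"
proof -
  have "affine hull S \<subseteq> affine hull (\<tau> - {Q})" using assms(1) by (rule hull_mono)
  then have "Q \<notin> affine hull S" using Q_notin_hull_rest by auto
  moreover have "Q \<notin> S" using assms(1) by auto
  ultimately have "is_simplex 3 (insert Q S)"
    using assms(2) affine_independent_insert unfolding is_simplex_def by auto
  moreover have "insert Q S \<subseteq> \<tau>" using assms(1) Q_in by auto
  ultimately show thesis using simplices_B B_simplex_imp_B_coord that by blast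
qed

lemma rest_on_coord_hyperplane:
  assumes "S \<subseteq> \<tau> - {Q}" "is_simplex 2 S" "\<forall>x\<in>S. x $ i = 0"
  shows "\<forall>x\<in>\<tau> - {Q}. x $ i = 0"
proof -
  have "aff_dim S = 2"
    using assms(2) aff_dim_affine_independent unfolding is_simplex_def by fastforce
  then have "affine hull S = affine hull (\<tau> - {Q})"
    using assms(1,2) aff_dim_rest unfolding is_simplex_def
    by (intro affine_dim_equal affine_affine_hull hull_mono) auto
  moreover have "affine hull S \<subseteq> {x. axis i 1 \<bullet> x = 0}"
    by (intro hull_minimal affine_hyperplane) (use assms(3) in \<open>auto simp: inner_axis'\<close>)
  ultimately have "axis i 1 \<bullet> x = 0" if "x \<in> \<tau> - {Q}" for x
    using hull_inc[OF that] by blast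
  then show ?thesis by (simp add: inner_axis')
qed

lemma triangle_exists: "\<exists>S\<subseteq>\<tau> - {Q}. is_simplex 2 S"
proof -
  obtain S where S: "S \<subseteq> \<tau> - {Q}" "\<not> affine_dependent S" "affine hull (\<tau> - {Q}) = affine hull S"
    using affine_basis_exists[of "\<tau> - {Q}"] by blast
  have "aff_dim S = 2" using aff_dim_rest S(3) by (metis aff_dim_affine_hull)
  then have "card S = 3" using aff_dim_affine_independent[OF S(2)] by simp
  then show ?thesis unfolding is_simplex_def using S(1,2) aff_independent_finite by auto
qed

lemma triangle_B_coord_off_axis:
  assumes "\<not> (Q $ i = 1 \<and> (\<forall>x\<in>\<tau> - {Q}. x $ i = 0))" "S \<subseteq> \<tau> - {Q}" "is_simplex 2 S"
  shows "\<exists>c\<in>- {i}. B_coord c S"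
proof -
  obtain c where c: "B_coord c (insert Q S)" using B_coord_insert_Q[OF assms(2,3)] .
  show ?thesis
  proof (cases "c = i")
    case True
    then have "Q $ i = 1" "\<forall>x\<in>S. x $ i = 0"
      using B_coord_insert_nonzero[OF c] Q_i assms(2) by auto
    then show ?thesis using rest_on_coord_hyperplane[OF assms(2,3)] assms(1) by blast
  next
    case False
    then show ?thesis using B_coord_insert_zero[OF c] Q_off_axis by auto
  qed
qed

lemma classification: "B1_facet \<tau> \<or> B2_facet \<tau> \<or> flat_border \<tau>"
proof (cases "Q $ i = 1 \<and> (\<forall>x\<in>\<tau> - {Q}. x $ i = 0)")
  case True
  then have "B1_facet \<tau>"
    unfolding B1_facet_def using Q_in by (intro exI[of _ i] bexI[of _ Q]) auto
  then show ?thesis ..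
next
  case False
  interpret config: B_config "\<tau> - {Q}" Q "- {i}"
  proof
    show "card (- {i}) = 3" by (simp add: Compl_eq_Diff_UNIV card_Diff_singleton)
    show "Q \<notin> \<tau> - {Q}" by simp
    show "Q $ c = 0" if "c \<in> - {i}" for c using that Q_off_axis by simp
    show "x = y" if "x \<in> insert Q (\<tau> - {Q})" "y \<in> insert Q (\<tau> - {Q})" "\<forall>c\<in>- {i}. x $ c = y $ c"
      for x y using that Q_in by (intro eq_if_eq_off_axis) auto
    show "x = y" if "x \<in> \<tau> - {Q}" "y \<in> \<tau> - {Q}" "m \<in> - {i}" "m' \<in> - {i}" "m \<noteq> m'"
      "x $ m = 0" "x $ m' = 0" "y $ m = 0" "y $ m' = 0" for x y m m'
      using that vanishing_pair_unique[of x y m m'] by simp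
    show "\<exists>c\<in>- {i}. B_coord c S" if "S \<subseteq> \<tau> - {Q}" "is_simplex 2 S" for S
      using triangle_B_coord_off_axis[OF False that] .
    show "\<exists>S\<subseteq>\<tau> - {Q}. is_simplex 2 S" by (rule triangle_exists)
  qed
  show ?thesis using config.classification Q_in by (simp add: insert_absorb)
qed

end

theorem lemma2p9:
  fixes \<tau> :: "(real ^ 4) set" and Q :: "real ^ 4"
  assumes "B_facet \<tau>"
    and "Q \<in> \<tau>"
    and "\<exists>i. Q $ i \<noteq> 0 \<and> (\<forall>j. j \<noteq> i \<longrightarrow> Q $ j = 0)"
    and "aff_dim (\<tau> - {Q}) = 2"
  shows "B1_facet \<tau> \<or> B2_facet \<tau> \<or> flat_border \<tau>"
proof -
  obtain i where "Q $ i \<noteq> 0" "\<forall>j. j \<noteq> i \<longrightarrow> Q $ j = 0" using assms(3) by blast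
  moreover obtain a b where "\<forall>j. a $ j > 0" "affine hull \<tau> = {x. a \<bullet> x = b}"
    and "\<forall>S\<subseteq>\<tau>. is_simplex 3 S \<longrightarrow> B_simplex 3 S"
    using assms(1) unfolding B_facet_def by auto
  ultimately interpret axis_B_facet \<tau> Q a b i
    using assms(2,4) by unfold_locales (auto simp: less_imp_neq[symmetric])
  show ?thesis by (rule classification)
qed

end
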